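(* For every integer partition $\lambda$ there exists a unique elementary interval bipartition $(\mathbf L,\mathbf R)$ such that $\lambda=\boldsymbol\lambda(\mathbf L,\mathbf R)$.
   Context: A bipartition of a set $\mathbf A$ is an ordered pair $(\mathbf L,\mathbf R)$ with $\mathbf L\cup\mathbf R=\mathbf A$, $\mathbf L\cap\mathbf R=\varnothing$. An interval bipartition is a bipartition of an interval $\{i,\dots,j\}$ of $\mathbb{N}^*$ (or of $\varnothing$); it is elementary if either $\mathbf L=\mathbf R=\varnothing$, or $1\in\mathbf L$ and $\max(\mathbf L\cup\mathbf R)\in\mathbf R$. For $\mathbf L=\{\ell_1<\dots<\ell_p\}$ nonempty, $\boldsymbol\lambda(\mathbf L,\mathbf R)$ is the integer partition with $\boldsymbol\lambda(\mathbf L,\mathbf R)_i=\#\{r\in\mathbf R:\ell_i<r\}$ (zero parts discarded); if $\mathbf L=\varnothing$, $\boldsymbol\lambda(\mathbf L,\mathbf R)=(0)$. The empty partition is $(0)$. *)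

theory Defs
  imports Main
begin

text \<open>Integer partitions: weakly decreasing lists of positive integers.
  The empty partition (written (0) in the paper) is the empty list.\<close>
definition integer_partition :: "nat list \<Rightarrow> bool" where
  "integer_partition xs \<longleftrightarrow> sorted_wrt (\<ge>) xs \<and> (\<forall>x\<in>set xs. 0 < x)"

definition bipartition_of :: "nat set \<times> nat set \<Rightarrow> nat set \<Rightarrow> bool" where
  "bipartition_of LR A \<longleftrightarrow> fst LR \<union> snd LR = A \<and> fst LR \<inter> snd LR = {}"

definition pos_interval :: "nat set \<Rightarrow> bool" where
  "pos_interval A \<longleftrightarrow> A = {} \<or> (\<exists>i j. 1 \<le> i \<and> i \<le> j \<and> A = {i..j})"

definition interval_bipartition :: "nat set \<times> nat set \<Rightarrow> bool" where
  "interval_bipartition LR \<longleftrightarrow> (\<exists>A. pos_interval A \<and> bipartition_of LR A)"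

definition elementary :: "nat set \<times> nat set \<Rightarrow> bool" where
  "elementary LR \<longleftrightarrow> interval_bipartition LR \<and>
     ((fst LR = {} \<and> snd LR = {}) \<or>
      (1 \<in> fst LR \<and> Max (fst LR \<union> snd LR) \<in> snd LR))"

definition lam :: "nat set \<times> nat set \<Rightarrow> nat list" where
  "lam LR = filter (\<lambda>k. 0 < k)
     (map (\<lambda>l. card {r \<in> snd LR. l < r}) (sorted_list_of_set (fst LR)))"

end

theory Submission
  imports Defs
begin

text \<open>Let (L, R) be an elementary bipartition of {1..n} with |L| = p, and let
  l_0 < ... < l_(p-1) be the elements of L. Of the n - l_k numbers above l_k exactly p - 1 - k
  lie in L, so the k-th count is n - l_k - (p - 1 - k); it is positive because n is in R, so no
  part is discarded. As l_0 = 1, this forces n = \<lambda>_0 + p and l_k = \<lambda>_0 - \<lambda>_k + k + 1: the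
  partition determines (L, R). Conversely, for every partition \<lambda> these formulas give a strictly
  increasing sequence from l_0 = 1 to l_(p-1) < n, hence an elementary bipartition realising \<lambda>.\<close>

lemma card_greater_nth_strict_sorted:
  fixes xs :: "'a::linorder list"
  assumes "sorted_wrt (<) xs" "k < length xs"
  shows "card {x \<in> set xs. xs ! k < x} = length xs - Suc k"
proof -
  have split: "xs = take k xs @ xs ! k # drop (Suc k) xs"
    using assms(2) by (rule id_take_nth_drop)
  then have "sorted_wrt (<) (take k xs @ xs ! k # drop (Suc k) xs)"
    using assms(1) by simp
  then have "{x \<in> set xs. xs ! k < x} = set (drop (Suc k) xs)"
    by (subst split) (auto simp: sorted_wrt_append)
  moreover have "distinct (drop (Suc k) xs)"
    using assms(1) by (simp add: strict_sorted_iff)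
  ultimately show ?thesis
    by (simp add: distinct_card)
qed

lemma sorted_list_of_set_image_lessThan:
  fixes g :: "nat \<Rightarrow> 'a::linorder"
  assumes "strict_mono_on {..<p} g"
  shows "sorted_list_of_set (g ` {..<p}) = map g [0..<p]"
proof (rule strict_sorted_equal)
  show "sorted_wrt (<) (map g [0..<p])"
    using assms by (auto simp: sorted_wrt_iff_nth_less strict_mono_on_def)
qed auto

lemma card_greater_in_interval_bipartition:
  assumes "L \<union> R = {1..n}" "L \<inter> R = {}" "l \<in> L"
  shows "card {r \<in> R. l < r} + card {x \<in> L. l < x} + l = n"
proof -
  have "finite L" "finite R"
    using assms(1) by (metis finite_Un finite_atLeastAtMost)+
  then have "card ({r \<in> R. l < r} \<union> {x \<in> L. l < x}) =
      card {r \<in> R. l < r} + card {x \<in> L. l < x}"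
    using assms(2) by (intro card_Un_disjoint) auto
  moreover have "{r \<in> R. l < r} \<union> {x \<in> L. l < x} = {x \<in> L \<union> R. l < x}"
    by blast
  moreover have "{x \<in> L \<union> R. l < x} = {l<..n}"
    unfolding assms(1) by auto
  moreover have "l \<le> n"
    using assms(1,3) by auto
  ultimately show ?thesis
    by simp
qed

lemma lam_interval_bipartition:
  assumes LR: "L \<union> R = {1..n}" "L \<inter> R = {}" and "n \<in> R"
  shows "length (lam (L, R)) = card L"
    and "k < card L \<Longrightarrow> lam (L, R) ! k + sorted_list_of_set L ! k + (card L - Suc k) = n"
proof -
  define ls where "ls = sorted_list_of_set L"
  have "finite L"
    using LR(1) by (metis finite_Un finite_atLeastAtMost)
  then have ls: "set ls = L" "length ls = card L" "sorted_wrt (<) ls"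
    by (simp_all add: ls_def)
  have "0 < card {r \<in> R. l < r}" if "l \<in> L" for l
  proof -
    have "l \<le> n" "l \<noteq> n"
      using that LR \<open>n \<in> R\<close> by auto
    then have "n \<in> {r \<in> R. l < r}"
      using \<open>n \<in> R\<close> by simp
    moreover have "finite R"
      using LR(1) by (metis finite_Un finite_atLeastAtMost)
    ultimately show ?thesis
      by (auto simp: card_gt_0_iff)
  qed
  then have lam: "lam (L, R) = map (\<lambda>l. card {r \<in> R. l < r}) ls"
    by (simp add: lam_def ls_def[symmetric] filter_id_conv ls(1))
  then show "length (lam (L, R)) = card L"
    by (simp add: ls(2))
  assume k: "k < card L"
  then have "ls ! k \<in> L"
    using ls(1,2) nth_mem by metis
  from card_greater_in_interval_bipartition[OF LR this]
    card_greater_nth_strict_sorted[OF ls(3), of k]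
  show "lam (L, R) ! k + ls ! k + (card L - Suc k) = n"
    using k by (simp add: lam ls)
qed

lemma elementary_iff:
  "elementary (L, R) \<longleftrightarrow>
     L = {} \<and> R = {} \<or> (\<exists>n. L \<union> R = {1..n} \<and> L \<inter> R = {} \<and> 1 \<in> L \<and> n \<in> R)"
proof
  assume el: "elementary (L, R)"
  show "L = {} \<and> R = {} \<or> (\<exists>n. L \<union> R = {1..n} \<and> L \<inter> R = {} \<and> 1 \<in> L \<and> n \<in> R)"
  proof (cases "L = {} \<and> R = {}")
    case False
    with el have one: "1 \<in> L" and max: "Max (L \<union> R) \<in> R" and disj: "L \<inter> R = {}"
      and "pos_interval (L \<union> R)"
      by (auto simp: elementary_def interval_bipartition_def bipartition_of_def)
    then obtain i n where "1 \<le> i" "L \<union> R = {i..n}"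
      by (auto simp: pos_interval_def)
    with one have LR: "L \<union> R = {1..n}" and "1 \<le> n"
      by (metis UnI1 atLeastAtMost_iff le_antisym)+
    then have "Max (L \<union> R) = n"
      by (intro Max_eqI) auto
    with LR disj one max show ?thesis
      by auto
  qed simp
next
  assume "L = {} \<and> R = {} \<or> (\<exists>n. L \<union> R = {1..n} \<and> L \<inter> R = {} \<and> 1 \<in> L \<and> n \<in> R)"
  then show "elementary (L, R)"
  proof
    assume "\<exists>n. L \<union> R = {1..n} \<and> L \<inter> R = {} \<and> 1 \<in> L \<and> n \<in> R"
    then obtain n where LR: "L \<union> R = {1..n}" "L \<inter> R = {}" "1 \<in> L" "n \<in> R"
      by blast
    then have "1 \<le> n" by auto
    then have "Max (L \<union> R) = n"
      unfolding LR by (intro Max_eqI) auto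
    with LR \<open>1 \<le> n\<close> show ?thesis
      by (auto simp: elementary_def interval_bipartition_def bipartition_of_def pos_interval_def)
  qed (auto simp: elementary_def interval_bipartition_def bipartition_of_def pos_interval_def)
qed

lemma integer_partition_nth_le:
  assumes "integer_partition xs" "i \<le> j" "j < length xs"
  shows "xs ! j \<le> xs ! i"
  using assms unfolding integer_partition_def
  by (cases "i = j") (auto dest: sorted_wrt_nth_less[of "(\<ge>)" xs i j])

definition left_of_partition :: "nat list \<Rightarrow> nat set" where
  "left_of_partition xs = (\<lambda>k. xs ! 0 - xs ! k + k + 1) ` {..<length xs}"

definition lam_inverse :: "nat list \<Rightarrow> nat set \<times> nat set" where
  "lam_inverse xs =
     (if xs = [] then ({}, {})
      else (left_of_partition xs, {1..xs ! 0 + length xs} - left_of_partition xs))"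

lemma elementary_lam_inverse:
  assumes xs: "integer_partition xs"
  shows "elementary (lam_inverse xs) \<and> lam (lam_inverse xs) = xs"
proof (cases "xs = []")
  case True
  then show ?thesis
    by (simp add: lam_inverse_def elementary_iff lam_def)
next
  case False
  define p where "p = length xs"
  define n where "n = xs ! 0 + p"
  define g where "g k = xs ! 0 - xs ! k + k + 1" for k
  define L where "L = left_of_partition xs"
  have L: "L = g ` {..<p}"
    by (simp add: L_def left_of_partition_def g_def p_def)
  have "0 < p"
    using False by (simp add: p_def)
  have bounds: "xs ! k \<le> xs ! 0" "0 < xs ! k" if "k < p" for k
    using that integer_partition_nth_le[OF xs, of 0 k] xs
    by (auto simp: p_def integer_partition_def)
  have mono: "strict_mono_on {..<p} g"
  proof (rule strict_mono_onI)
    fix i j assume "i \<in> {..<p}" "j \<in> {..<p}" "i < j"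
    then show "g i < g j"
      using integer_partition_nth_le[OF xs, of i j] bounds[of i] bounds[of j]
      by (simp add: g_def p_def)
  qed
  have "g k \<in> {1..<n}" if "k < p" for k
    using bounds[OF that] that by (simp add: g_def n_def)
  then have "L \<subseteq> {1..<n}"
    by (auto simp: L)
  moreover have "1 \<in> L"
    using \<open>0 < p\<close> by (force simp: L g_def)
  ultimately have LR: "L \<union> ({1..n} - L) = {1..n}" "L \<inter> ({1..n} - L) = {}" "1 \<in> L"
      "n \<in> {1..n} - L"
    by auto
  have lam_inv: "lam_inverse xs = (L, {1..n} - L)"
    using False by (simp add: lam_inverse_def L_def n_def p_def)
  have card_L: "card L = p"
    using mono by (simp add: L card_image strict_mono_on_imp_inj_on)
  have sorted_L: "sorted_list_of_set L = map g [0..<p]"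
    unfolding L using mono by (rule sorted_list_of_set_image_lessThan)
  note lam_LR = lam_interval_bipartition[OF LR(1,2,4), unfolded card_L sorted_L]
  have "lam (L, {1..n} - L) ! k = xs ! k" if "k < p" for k
    using lam_LR(2)[OF that] bounds[OF that] that unfolding g_def n_def by simp
  then have "lam (L, {1..n} - L) = xs"
    using lam_LR(1) by (intro nth_equalityI) (simp_all add: p_def)
  then show ?thesis
    using LR by (auto simp: lam_inv elementary_iff)
qed

lemma eq_lam_inverse_if_elementary:
  assumes xs: "integer_partition xs" and "elementary (L, R)" and lam: "lam (L, R) = xs"
  shows "(L, R) = lam_inverse xs"
proof (cases "L = {} \<and> R = {}")
  case True
  then show ?thesis
    using lam by (simp add: lam_def lam_inverse_def)
next
  case False
  with \<open>elementary (L, R)\<close> obtain n where LR: "L \<union> R = {1..n}" "L \<inter> R = {}" "1 \<in> L" "n \<in> R"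
    by (auto simp: elementary_iff)
  define ls where "ls = sorted_list_of_set L"
  define p where "p = card L"
  have "finite L"
    using LR(1) by (metis finite_Un finite_atLeastAtMost)
  then have ls: "set ls = L" "length ls = p"
    by (simp_all add: ls_def p_def)
  note lam_LR = lam_interval_bipartition[OF LR(1,2,4), folded ls_def p_def, unfolded lam]
  have "0 < p"
    using \<open>finite L\<close> \<open>1 \<in> L\<close> by (auto simp: p_def card_gt_0_iff)
  then have "xs \<noteq> []"
    using lam_LR(1) by auto
  have "Min L = 1"
    using LR(1,3) by (intro Min_eqI \<open>finite L\<close>) auto
  then have "ls ! 0 = 1"
    using \<open>finite L\<close> \<open>1 \<in> L\<close> unfolding ls_def by (subst sorted_list_of_set_nonempty) auto
  then have n: "n = xs ! 0 + p"
    using lam_LR(2)[OF \<open>0 < p\<close>] \<open>0 < p\<close> by simp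
  have "ls ! k = xs ! 0 - xs ! k + k + 1" if "k < p" for k
    using lam_LR(2)[OF that] integer_partition_nth_le[OF xs, of 0 k] that lam_LR(1) n by linarith
  moreover have "L = (!) ls ` {..<p}"
    using ls by (auto simp: in_set_conv_nth)
  ultimately have "L = left_of_partition xs"
    unfolding left_of_partition_def lam_LR(1) by simp
  moreover have "R = {1..n} - L"
    using LR(1,2) by auto
  ultimately show ?thesis
    using \<open>xs \<noteq> []\<close> n lam_LR(1) by (simp add: lam_inverse_def)
qed

theorem proposition3p11:
  fixes lam0 :: "nat list"
  assumes "integer_partition lam0"
  shows "\<exists>!LR. elementary LR \<and> lam LR = lam0"
proof (rule ex1I)
  show "elementary (lam_inverse lam0) \<and> lam (lam_inverse lam0) = lam0"
    using assms by (rule elementary_lam_inverse)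
next
  fix LR assume "elementary LR \<and> lam LR = lam0"
  then show "LR = lam_inverse lam0"
    using eq_lam_inverse_if_elementary[OF assms] by (cases LR) simp
qed

end
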